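(* Let $p$ be an odd prime, $q$ a power of $p$, and $n\ge 0$ an integer. Let $V=\{y\in\mathbb{F}_{q^2}: y^q=1-y\}$ and $S=(\mathbb{F}_q\cup V)\setminus\{\tfrac12\}$. Then $F_n(1,x)$ is a permutation polynomial of $\mathbb{F}_q$ if and only if the map $g:S\to\mathbb{F}_{q^2}$, $g(y)=\dfrac{y^n-(1-y)^n}{2y-1}$, is 2-to-1 (every element of $g(S)$ has exactly two preimages in $S$) and $g(y)\neq \dfrac{n}{2^{n-1}}$ for every $y\in S$.
   Context: For an integer $n\ge 1$, the $n$-th reversed Dickson polynomial of the third kind is $F_n(a,x)=\sum_{i=0}^{\lfloor n/2\rfloor}\frac{n-2i}{n-i}\binom{n-i}{i}(-x)^i a^{n-2i}$, where each coefficient $\frac{n-2i}{n-i}\binom{n-i}{i}$ is an integer (read in $\mathbb{F}_q$), and $F_0(a,x)=0$. A polynomial $f\in\mathbb{F}_q[x]$ is a permutation polynomial of $\mathbb{F}_q$ if $c\mapsto f(c)$ is a bijection of $\mathbb{F}_q$. *)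

theory Defs
  imports "HOL-Computational_Algebra.Primes"
begin

text \<open>Integer coefficient (n-2i)/(n-i) * binom(n-i,i) of the reversed Dickson polynomial
  of the third kind (an integer for i \<le> n/2, n \<ge> 1); computed exactly as a quotient of naturals.\<close>
definition rdickson3_coeff :: "nat \<Rightarrow> nat \<Rightarrow> nat" where
  "rdickson3_coeff n i = ((n - 2*i) * ((n - i) choose i)) div (n - i)"

definition rdickson3 :: "nat \<Rightarrow> 'a::comm_ring_1 \<Rightarrow> 'a \<Rightarrow> 'a" where
  "rdickson3 n a x = (if n = 0 then 0 else
     (\<Sum>i\<le>n div 2. of_nat (rdickson3_coeff n i) * (-x)^i * a^(n - 2*i)))"

definition subfield_Fq :: "nat \<Rightarrow> 'a::field set" where
  "subfield_Fq q = {c. c^q = c}"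

definition setV :: "nat \<Rightarrow> 'a::field set" where
  "setV q = {y. y^q = 1 - y}"

definition setS :: "nat \<Rightarrow> 'a::field set" where
  "setS q = (subfield_Fq q \<union> setV q) - {1/2}"

definition gmap :: "nat \<Rightarrow> 'a::field \<Rightarrow> 'a" where
  "gmap n y = (y^n - (1 - y)^n) / (2*y - 1)"

end

theory Submission
  imports Defs "HOL-Computational_Algebra.Polynomial" "HOL-Library.Cardinality"
    "HOL-Number_Theory.Residues"
begin

text \<open>Substituting x = y(1-y) into the recurrence F_{n+2} = F_{n+1} - x F_n of F_n(1,x) gives
  the recurrence of (y^n - (1-y)^n)/(2y-1), so g = F_n(1,-) \<circ> h on S for h(y) = y(1-y), while
  F_n(1,1/4) = n/2^(n-1). For c \<in> F_q the roots (1 \<plusminus> s)/2 of y^2 - y + c, with s^2 = 1 - 4c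
  (a square in F_{q^2}), lie in F_q or in V, so h maps S onto F_q - {1/4} with fibres {y, 1-y}.
  Hence g is 2-to-1 exactly when F_n(1,-) is injective on F_q - {1/4}, and g misses n/2^(n-1)
  exactly when F_n(1,-) does not take the value F_n(1,1/4) there; together these say that
  F_n(1,-) is injective, i.e. a permutation, on F_q.\<close>

section \<open>The polynomials F_n(1,x)\<close>

lemma rdickson3_coeff_eq_0: "n \<le> 2 * i \<Longrightarrow> rdickson3_coeff n i = 0"
  by (simp add: rdickson3_coeff_def)

lemma rdickson3_coeff_0: "rdickson3_coeff n 0 = (if n = 0 then 0 else 1)"
  by (simp add: rdickson3_coeff_def)

lemma rdickson3_coeff_Suc_eq_choose_diff:
  assumes "2 * Suc i \<le> n"
  shows "int (rdickson3_coeff n (Suc i)) = int ((n - Suc i) choose Suc i) - int ((n - Suc i - 1) choose i)"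
proof -
  define m where "m = n - Suc i"
  obtain m' where m': "m = Suc m'" using assms by (cases m) (auto simp: m_def)
  have key: "m * ((m - 1) choose i) = (m choose Suc i) * Suc i"
    using Suc_times_binomial_eq[of m' i] m' by simp
  have le: "(m - 1) choose i \<le> m choose Suc i"
  proof -
    have "m * ((m - 1) choose i) = (m choose Suc i) * Suc i" by (fact key)
    also have "\<dots> \<le> (m choose Suc i) * m" using assms by (intro mult_le_mono2) (simp add: m_def)
    finally have "m * ((m - 1) choose i) \<le> m * (m choose Suc i)" by (simp add: mult.commute)
    thus ?thesis using m' by simp
  qed
  have "n - 2 * Suc i = m - Suc i" by (simp add: m_def)
  hence "(n - 2 * Suc i) * (m choose Suc i) = m * (m choose Suc i) - Suc i * (m choose Suc i)"
    by (simp only: diff_mult_distrib)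
  also have "\<dots> = m * ((m choose Suc i) - ((m - 1) choose i))"
    using key by (simp add: diff_mult_distrib2 mult.commute)
  finally have "rdickson3_coeff n (Suc i) = m * ((m choose Suc i) - ((m - 1) choose i)) div m"
    by (simp add: rdickson3_coeff_def m_def)
  also have "\<dots> = (m choose Suc i) - ((m - 1) choose i)"
    using m' by (intro nonzero_mult_div_cancel_left) simp
  finally have "rdickson3_coeff n (Suc i) = (m choose Suc i) - ((m - 1) choose i)" .
  with le show ?thesis by (simp add: m_def of_nat_diff)
qed

lemma int_rdickson3_coeff:
  "int (rdickson3_coeff n i) = (if 2 * i \<le> n \<and> 0 < n then int ((n - i) choose i)
      - (if i = 0 then 0 else int ((n - i - 1) choose (i - 1))) else 0)"
proof (cases i)
  case 0
  then show ?thesis by (simp add: rdickson3_coeff_0)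
next
  case (Suc j)
  then show ?thesis
    using rdickson3_coeff_Suc_eq_choose_diff[of j n] rdickson3_coeff_eq_0[of n i] by auto
qed

lemma rdickson3_coeff_Suc_Suc:
  "rdickson3_coeff (Suc (Suc n)) (Suc i) = rdickson3_coeff (Suc n) (Suc i) + rdickson3_coeff n i"
proof -
  have "int (rdickson3_coeff (Suc (Suc n)) (Suc i))
        = int (rdickson3_coeff (Suc n) (Suc i)) + int (rdickson3_coeff n i)"
  proof (cases "2 * i \<le> n")
    case False
    then show ?thesis by (simp add: int_rdickson3_coeff)
  next
    case True
    have pascal1: "Suc (n - i) choose Suc i = ((n - i) choose Suc i) + ((n - i) choose i)"
      by simp
    show ?thesis
    proof (cases "n = 2 * i")
      case True
      then show ?thesis by (cases i) (simp_all add: int_rdickson3_coeff)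
    next
      case False
      with \<open>2 * i \<le> n\<close> have "n - i = Suc (n - i - 1)" by simp
      then have pascal2: "(n - i) choose i
          = ((n - i - 1) choose i) + (if i = 0 then 0 else (n - i - 1) choose (i - 1))"
        using binomial_Suc_Suc[of "n - i - 1" "i - 1"] by (cases i) simp_all
      show ?thesis
        using True False pascal1 pascal2 by (simp add: int_rdickson3_coeff Suc_diff_le)
    qed
  qed
  then show ?thesis by linarith
qed

lemma rdickson3_one_eq_sum:
  "rdickson3 n 1 x = (\<Sum>i\<le>n. of_nat (rdickson3_coeff n i) * (-x) ^ i)"
proof (cases "n = 0")
  case True
  then show ?thesis by (simp add: rdickson3_def rdickson3_coeff_0)
next
  case False
  then have "rdickson3 n 1 x = (\<Sum>i\<le>n div 2. of_nat (rdickson3_coeff n i) * (-x) ^ i)"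
    by (simp add: rdickson3_def)
  also have "\<dots> = (\<Sum>i\<le>n. of_nat (rdickson3_coeff n i) * (-x) ^ i)"
  proof (rule sum.mono_neutral_left)
    show "\<forall>i\<in>{..n} - {..n div 2}. of_nat (rdickson3_coeff n i) * (-x) ^ i = 0"
    proof
      fix i assume "i \<in> {..n} - {..n div 2}"
      then have "n \<le> 2 * i" by auto
      then show "of_nat (rdickson3_coeff n i) * (-x) ^ i = 0" by (simp add: rdickson3_coeff_eq_0)
    qed
  qed auto
  finally show ?thesis .
qed

lemma rdickson3_one_0 [simp]: "rdickson3 0 1 x = 0"
  by (simp add: rdickson3_def)

lemma rdickson3_one_1 [simp]: "rdickson3 (Suc 0) 1 x = 1"
  by (simp add: rdickson3_def rdickson3_coeff_0)

lemma rdickson3_one_Suc_Suc: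
  "rdickson3 (Suc (Suc n)) 1 x = rdickson3 (Suc n) 1 x - x * rdickson3 n 1 x"
proof -
  let ?c = "\<lambda>m i. of_nat (rdickson3_coeff m i) * (-x) ^ i"
  have shift: "rdickson3 (Suc m) 1 x = 1 + (\<Sum>i\<le>m. ?c (Suc m) (Suc i))" for m
    unfolding rdickson3_one_eq_sum sum.atMost_Suc_shift by (simp add: rdickson3_coeff_0)
  have "(\<Sum>i\<le>Suc n. ?c (Suc (Suc n)) (Suc i)) = (\<Sum>i\<le>Suc n. ?c (Suc n) (Suc i) - x * ?c n i)"
    by (intro sum.cong) (simp_all add: rdickson3_coeff_Suc_Suc algebra_simps)
  also have "\<dots> = (\<Sum>i\<le>Suc n. ?c (Suc n) (Suc i)) - x * (\<Sum>i\<le>Suc n. ?c n i)"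
    by (simp only: sum_subtractf sum_distrib_left)
  also have "(\<Sum>i\<le>Suc n. ?c (Suc n) (Suc i)) = (\<Sum>i\<le>n. ?c (Suc n) (Suc i))"
    by (simp add: rdickson3_coeff_eq_0)
  also have "(\<Sum>i\<le>Suc n. ?c n i) = rdickson3 n 1 x"
    by (simp add: rdickson3_one_eq_sum rdickson3_coeff_eq_0)
  finally show ?thesis
    by (simp only: shift) simp
qed

lemma rdickson3_one_functional_eq:
  fixes y :: "'a::comm_ring_1"
  shows "rdickson3 n 1 (y * (1 - y)) * (2 * y - 1) = y ^ n - (1 - y) ^ n"
proof (induction n rule: induct_nat_012)
  case (ge2 n)
  then show ?case
    by (simp add: rdickson3_one_Suc_Suc left_diff_distrib mult.assoc) (simp add: algebra_simps)
qed simp_all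

lemma rdickson3_one_quarter_mult:
  fixes x :: "'a::comm_ring_1"
  assumes "4 * x = 1"
  shows "rdickson3 n 1 x * 2 ^ n = 2 * of_nat n"
proof (induction n rule: induct_nat_012)
  case (ge2 n)
  have "rdickson3 (Suc (Suc n)) 1 x * 2 ^ Suc (Suc n)
      = 2 * (rdickson3 (Suc n) 1 x * 2 ^ Suc n) - (4 * x) * (rdickson3 n 1 x * 2 ^ n)"
    by (simp add: rdickson3_one_Suc_Suc algebra_simps)
  also have "\<dots> = 2 * of_nat (Suc (Suc n))"
    using ge2 assms by (simp add: algebra_simps)
  finally show ?case .
qed simp_all

lemma times_one_minus_eq_iff:
  fixes y y' :: "'a::idom"
  shows "y' * (1 - y') = y * (1 - y) \<longleftrightarrow> y' = y \<or> y' = 1 - y"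
proof -
  have "y' * (1 - y') - y * (1 - y) = (y - y') * (y' - (1 - y))"
    by (simp add: algebra_simps)
  then have "y' * (1 - y') = y * (1 - y) \<longleftrightarrow> (y - y') * (y' - (1 - y)) = 0"
    by (metis eq_iff_diff_eq_0)
  then show ?thesis by auto
qed

lemma gmap_eq_rdickson3_one:
  fixes y :: "'a::field"
  assumes "y \<noteq> 1 / 2"
  shows "gmap n y = rdickson3 n 1 (y * (1 - y))"
proof -
  have "2 * y - 1 \<noteq> 0"
  proof
    assume "2 * y - 1 = 0"
    then have "2 * y = 1" by simp
    then have "y = 1 / 2" by (auto simp: eq_divide_eq mult.commute)
    with assms show False ..
  qed
  then show ?thesis
    by (simp add: gmap_def flip: rdickson3_one_functional_eq)
qed

lemma four_nonzero:
  assumes "(2::'a::idom) \<noteq> 0"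
  shows "(4::'a) \<noteq> 0"
proof -
  from assms have "(2::'a) * 2 \<noteq> 0" by (simp only: mult_eq_0_iff) simp
  then show ?thesis by simp
qed

lemma rdickson3_one_quarter:
  assumes "(2::'a::field) \<noteq> 0"
  shows "of_nat n / 2 ^ (n - 1) = rdickson3 n 1 (1 / 4 :: 'a)"
proof (cases n)
  case (Suc m)
  have "rdickson3 n 1 (1 / 4 :: 'a) * 2 ^ n = 2 * of_nat n"
    using four_nonzero[OF assms] by (intro rdickson3_one_quarter_mult) simp
  then have "2 * (rdickson3 n 1 (1 / 4 :: 'a) * 2 ^ m) = 2 * of_nat n"
    by (simp add: Suc mult_ac)
  with assms have "rdickson3 n 1 (1 / 4 :: 'a) * 2 ^ m = of_nat n" by simp
  with Suc assms show ?thesis by (simp add: field_simps)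
qed simp

lemma times_one_minus_eq_quarter_iff:
  fixes y :: "'a::field"
  assumes "(2::'a) \<noteq> 0"
  shows "y * (1 - y) = 1 / 4 \<longleftrightarrow> y = 1 / 2"
proof -
  have half: "1 - 1 / 2 = (1 / 2 :: 'a)" using assms by (simp add: field_simps)
  have quarter: "1 / 4 = (1 / 2) * (1 - 1 / 2 :: 'a)" by (simp only: half) simp
  have "y * (1 - y) = 1 / 4 \<longleftrightarrow> y * (1 - y) = (1 / 2) * (1 - 1 / 2)" by (simp only: quarter)
  also have "\<dots> \<longleftrightarrow> y = 1 / 2 \<or> y = 1 - 1 / 2" by (rule times_one_minus_eq_iff)
  finally show ?thesis by (simp only: half simp_thms)
qed

section \<open>Finite fields of odd order\<close>

text \<open>The library's finite_field_power_card_eq_same needs the sort finite_field, to which a type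
  variable of sort {field, finite} cannot be instantiated.\<close>
lemma finite_field_power_card:
  fixes x :: "'a::{field,finite}"
  shows "x ^ CARD('a) = x"
proof (cases "x = 0")
  case False
  let ?U = "UNIV - {0::'a}"
  have "(\<Prod>y\<in>?U. x * y) = \<Prod>?U"
    using False by (intro prod.reindex_bij_witness[of _ "\<lambda>y. y / x" "\<lambda>y. x * y"]) auto
  then have "x ^ card ?U * \<Prod>?U = 1 * \<Prod>?U" by (simp add: prod.distrib)
  then have "x ^ card ?U = 1" by (subst (asm) mult_cancel_right) simp
  moreover have "CARD('a) = Suc (card ?U)" by (simp add: card_Diff_singleton)
  then have "x ^ CARD('a) = x * x ^ card ?U" by (simp only: power_Suc)
  ultimately show ?thesis by simp
qed (simp add: finite_UNIV_card_ge_0)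

lemma card_square_roots_le_2:
  fixes z :: "'a::idom"
  shows "card {s. s * s = z} \<le> 2"
proof -
  obtain t where "z = t * t \<or> {s. s * s = z} = {}" by blast
  then have "{s. s * s = z} \<subseteq> {t, -t}"
    by (auto simp: square_eq_iff)
  then have "card {s. s * s = z} \<le> card {t, -t}"
    by (rule card_mono[rotated]) simp
  also have "\<dots> \<le> 2" by (simp add: card_insert_le_m1)
  finally show ?thesis .
qed

text \<open>Euler's criterion: the squares of a finite field of odd order N are exactly the roots of
  x^((N+1)/2) - x, because there are at least (N+1)/2 squares and at most (N+1)/2 roots.\<close>
lemma finite_field_square_iff:
  fixes x :: "'a::{field,finite}"
  assumes "odd CARD('a)"
  shows "(\<exists>s. s * s = x) \<longleftrightarrow> x ^ ((CARD('a) + 1) div 2) = x"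
proof -
  define M where "M = (CARD('a) + 1) div 2"
  have two_M: "2 * M = CARD('a) + 1" using assms by (simp add: M_def)
  have "CARD('a) \<noteq> 1"
    using card_1_singletonE[of "UNIV :: 'a set"] zero_neq_one by (metis UNIV_I singletonD)
  with assms have "M \<ge> 2" using two_M by presburger
  define Sq where "Sq = range (\<lambda>s::'a. s * s)"
  define Rt where "Rt = {x::'a. x ^ M = x}"
  have "Sq \<subseteq> Rt"
  proof
    fix z assume "z \<in> Sq"
    then obtain s where z: "z = s * s" by (auto simp: Sq_def)
    have "z ^ M = s ^ (2 * M)" by (simp add: z power_mult power2_eq_square)
    also have "\<dots> = s * s" by (simp add: two_M finite_field_power_card)
    finally show "z \<in> Rt" by (simp add: Rt_def z)
  qed
  have "card Rt \<le> M"
  proof -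
    define P where "P = Polynomial.monom (1::'a) M - [:0, 1:]"
    have "Polynomial.coeff P M = 1" using \<open>M \<ge> 2\<close> by (simp add: P_def coeff_eq_0)
    then have "P \<noteq> 0" by auto
    moreover have "Polynomial.degree P \<le> M"
      using \<open>M \<ge> 2\<close> by (auto simp: P_def intro!: degree_diff_le degree_monom_le)
    moreover have "Rt = {x. poly P x = 0}" by (simp add: Rt_def P_def poly_monom)
    ultimately show ?thesis using card_poly_roots_bound[of P] by simp
  qed
  have "CARD('a) - 1 \<le> 2 * (card Sq - 1)"
  proof -
    have "UNIV - {0} = (\<Union>z\<in>Sq - {0}. {s::'a. s * s = z})" by (auto simp: Sq_def)
    then have "CARD('a) - 1 = card (\<Union>z\<in>Sq - {0}. {s::'a. s * s = z})"
      by (metis card_Diff_singleton finite UNIV_I)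
    also have "\<dots> \<le> (\<Sum>z\<in>Sq - {0}. card {s::'a. s * s = z})" by (rule card_UN_le) simp
    also have "\<dots> \<le> card (Sq - {0}) * 2" using sum_bounded_above[OF card_square_roots_le_2] by simp
    also have "card (Sq - {0}) = card Sq - 1" by (simp add: Sq_def card_Diff_singleton image_iff)
    finally show ?thesis by simp
  qed
  then have "card Rt \<le> card Sq" using \<open>card Rt \<le> M\<close> \<open>M \<ge> 2\<close> two_M by linarith
  then have "Sq = Rt" using card_seteq[of Rt Sq] \<open>Sq \<subseteq> Rt\<close> by simp
  then have "x \<in> Sq \<longleftrightarrow> x \<in> Rt" by simp
  then show ?thesis unfolding Sq_def Rt_def M_def by (metis (mono_tags) mem_Collect_eq rangeE rangeI)
qed

lemma power_Suc_mult_eq_self: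
  fixes x :: "'a::monoid_mult"
  assumes "x ^ Suc m = x"
  shows "x ^ Suc (m * j) = x"
proof (induction j)
  case (Suc j)
  have "x ^ Suc (m * Suc j) = x ^ Suc (m * j) * x ^ m"
    by (simp add: power_add[symmetric] algebra_simps)
  also have "\<dots> = x" using Suc assms by (simp add: power_Suc)
  finally show ?case .
qed simp

text \<open>For odd q, (q^2 + 1)/2 = 1 + (q - 1)(q + 1)/2, so Euler's criterion makes every element
  of F_q a square in a field of order q^2.\<close>
lemma square_root_in_field_of_card_square:
  fixes d :: "'a::{field,finite}"
  assumes "CARD('a) = q ^ 2" and "odd q" and "d ^ q = d"
  shows "\<exists>s. s * s = d"
proof -
  obtain r where q: "q = Suc (2 * r)" using \<open>odd q\<close> oddE by fastforce
  have "(CARD('a) + 1) div 2 = Suc (2 * r * Suc r)"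
    by (simp add: assms(1) q power2_eq_square algebra_simps)
  moreover have "d ^ Suc (2 * r * Suc r) = d"
    using assms(3) q by (intro power_Suc_mult_eq_self[of d "2 * r" "Suc r"]) simp
  ultimately show ?thesis
    using assms(1,2) by (simp add: finite_field_square_iff)
qed

lemma CHAR_eq_of_card_eq_prime_power:
  assumes "finite (UNIV :: 'a::field set)" and "prime p" and "card (UNIV :: 'a set) = p ^ m"
  shows "CHAR('a) = p"
proof -
  have "prime CHAR('a)"
    using assms(1) by (intro prime_CHAR_semidom finite_imp_CHAR_pos)
  moreover have "CHAR('a) dvd p ^ m"
    using CHAR_dvd_CARD[where 'a='a] assms(3) by simp
  ultimately show ?thesis
    using assms(2) by (simp add: prime_dvd_power primes_dvd_imp_eq)
qed

lemma two_nonzero_of_CHAR: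
  assumes "prime CHAR('a::comm_ring_1)" and "odd CHAR('a)"
  shows "(2::'a) \<noteq> 0"
proof
  assume "(2::'a) = 0"
  then have "CHAR('a) dvd 2" by (metis of_nat_numeral of_nat_eq_0_iff_char_dvd)
  with assms show False using primes_dvd_imp_eq[of "CHAR('a)" 2] by auto
qed

section \<open>The substitution x = y(1-y) over F_q\<close>

text \<open>Each fibre of F \<circ> h over S is twice as large as the corresponding fibre of F in A.\<close>
lemma card_fibres_comp_eq_2_iff_inj_on:
  assumes "finite S" and image_h: "h ` S = A"
    and fibres_h: "\<And>y. y \<in> S \<Longrightarrow> card {y' \<in> S. h y' = h y} = 2"
    and g_eq: "\<And>y. y \<in> S \<Longrightarrow> g y = F (h y)"
  shows "(\<forall>z \<in> g ` S. card {y \<in> S. g y = z} = 2) \<longleftrightarrow> inj_on F A"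
proof -
  have "finite A" using \<open>finite S\<close> image_h by blast
  have card_fibre: "card {y \<in> S. g y = z} = 2 * card {c \<in> A. F c = z}" for z
  proof -
    have "{y \<in> S. g y = z} = (\<Union>c \<in> {c \<in> A. F c = z}. {y \<in> S. h y = c})"
      using image_h g_eq by auto
    also have "card \<dots> = (\<Sum>c \<in> {c \<in> A. F c = z}. card {y \<in> S. h y = c})"
      using \<open>finite S\<close> \<open>finite A\<close> by (intro card_UN_disjoint) auto
    also have "\<dots> = (\<Sum>c \<in> {c \<in> A. F c = z}. 2)"
      using image_h fibres_h by (intro sum.cong) auto
    finally show ?thesis by simp
  qed
  have image_g: "g ` S = F ` A"
    using image_h g_eq by (auto simp: image_image cong: image_cong)
  show ?thesis
  proof
    assume two: "\<forall>z \<in> g ` S. card {y \<in> S. g y = z} = 2"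
    show "inj_on F A"
    proof (rule inj_onI, rule ccontr)
      fix c c' assume "c \<in> A" "c' \<in> A" "F c = F c'" "c \<noteq> c'"
      then have "{c, c'} \<subseteq> {d \<in> A. F d = F c}" by auto
      then have "2 \<le> card {d \<in> A. F d = F c}"
        using \<open>c \<noteq> c'\<close> \<open>finite A\<close> card_mono[of "{d \<in> A. F d = F c}" "{c, c'}"] by simp
      moreover have "card {d \<in> A. F d = F c} = 1"
        using two card_fibre[of "F c"] \<open>c \<in> A\<close> image_g by auto
      ultimately show False by simp
    qed
  next
    assume "inj_on F A"
    then have "{c \<in> A. F c = F d} = {d}" if "d \<in> A" for d
      using that by (auto dest: inj_onD)
    then show "\<forall>z \<in> g ` S. card {y \<in> S. g y = z} = 2"
      using image_g card_fibre by auto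
  qed
qed

lemma additive_power_diff:
  fixes x y :: "'a::comm_ring_1"
  assumes "\<And>a b :: 'a. (a + b) ^ q = a ^ q + b ^ q" and "odd q"
  shows "(x - y) ^ q = x ^ q - y ^ q"
  using assms(1)[of x "- y"] assms(2) by simp

lemma additive_power_of_nat:
  assumes "\<And>a b :: 'a::comm_ring_1. (a + b) ^ q = a ^ q + b ^ q" and "q > 0"
  shows "(of_nat m :: 'a) ^ q = of_nat m"
  by (induction m) (simp_all add: assms power_0_left)

lemma additive_power_rdickson3_one:
  fixes x :: "'a::comm_ring_1"
  assumes "\<And>a b :: 'a. (a + b) ^ q = a ^ q + b ^ q" and "odd q"
  shows "rdickson3 n 1 x ^ q = rdickson3 n 1 (x ^ q)"
proof (induction n rule: induct_nat_012)
  case 0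
  from \<open>odd q\<close> show ?case by (simp add: zero_power odd_pos)
next
  case (ge2 n)
  then show ?case
    by (simp add: rdickson3_one_Suc_Suc additive_power_diff[OF assms] power_mult_distrib)
qed simp

context
  fixes q :: nat
  assumes power_q_add: "\<And>x y :: 'a::field. (x + y) ^ q = x ^ q + y ^ q"
    and odd_q: "odd q"
    and two_nonzero: "(2::'a) \<noteq> 0"
begin

lemma power_q_one_minus: "(1 - y) ^ q = 1 - (y::'a) ^ q"
  using additive_power_diff[OF power_q_add odd_q, of 1 y] by simp

lemma of_nat_in_subfield_Fq: "(of_nat m :: 'a) \<in> subfield_Fq q"
  using additive_power_of_nat[OF power_q_add] odd_q by (simp add: subfield_Fq_def odd_pos)

lemma rdickson3_one_in_subfield_Fq:
  "c \<in> subfield_Fq q \<Longrightarrow> rdickson3 n 1 (c::'a) \<in> subfield_Fq q"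
  by (simp add: subfield_Fq_def additive_power_rdickson3_one[OF power_q_add odd_q])

lemma quarter_in_subfield_Fq: "(1 / 4 :: 'a) \<in> subfield_Fq q"
  using of_nat_in_subfield_Fq[of 4] by (simp add: subfield_Fq_def power_divide)

lemma setS_iff: "y \<in> setS q \<longleftrightarrow> ((y::'a) ^ q = y \<or> y ^ q = 1 - y) \<and> y \<noteq> 1 / 2"
  by (auto simp: setS_def subfield_Fq_def setV_def)

lemma one_minus_in_setS: "y \<in> setS q \<Longrightarrow> 1 - (y::'a) \<in> setS q"
  using two_nonzero by (auto simp: setS_iff power_q_one_minus field_simps)

lemma one_minus_neq_self: "y \<in> setS q \<Longrightarrow> 1 - (y::'a) \<noteq> y"
  using two_nonzero by (auto simp: setS_iff field_simps)

lemma card_setS_fibre: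
  assumes "y \<in> setS q"
  shows "card {y' \<in> setS q. y' * (1 - y') = y * (1 - (y::'a))} = 2"
proof -
  have "{y' \<in> setS q. y' * (1 - y') = y * (1 - y)} = {y, 1 - y}"
    using assms one_minus_in_setS by (auto simp: times_one_minus_eq_iff)
  then show ?thesis using one_minus_neq_self[OF assms] by simp
qed

text \<open>The roots of t^2 - t + c are (1 \<plusminus> s)/2 with s^2 = 1 - 4c; for c \<in> F_q the q-th power map
  fixes s or negates it, so the root lies in F_q or in V.\<close>
lemma image_setS_times_one_minus:
  assumes squares: "\<And>d::'a. d \<in> subfield_Fq q \<Longrightarrow> \<exists>s. s * s = d"
  shows "(\<lambda>y. y * (1 - y)) ` setS q = subfield_Fq q - {1 / 4 :: 'a}"
proof (intro equalityI subsetI)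
  fix c :: 'a assume "c \<in> (\<lambda>y. y * (1 - y)) ` setS q"
  then obtain y where y: "y \<in> setS q" "c = y * (1 - y)" by blast
  have "(y * (1 - y)) ^ q = y * (1 - y)"
    using y(1) unfolding setS_iff power_mult_distrib power_q_one_minus by auto
  moreover have "y * (1 - y) \<noteq> 1 / 4"
    using y(1) unfolding setS_iff times_one_minus_eq_quarter_iff[OF two_nonzero] by blast
  ultimately show "c \<in> subfield_Fq q - {1 / 4}" by (simp add: y(2) subfield_Fq_def)
next
  fix c :: 'a assume c: "c \<in> subfield_Fq q - {1 / 4}"
  then have "1 - 4 * c \<in> subfield_Fq q"
    using of_nat_in_subfield_Fq[of 4] by (simp add: subfield_Fq_def power_q_one_minus power_mult_distrib)
  then obtain s where s: "s * s = 1 - 4 * c" using squares by blast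
  define y where "y = (1 + s) / 2"
  have "s ^ q * s ^ q = s * s"
    using s \<open>1 - 4 * c \<in> subfield_Fq q\<close> by (simp add: subfield_Fq_def flip: power_mult_distrib)
  then have s_power_q: "s ^ q = s \<or> s ^ q = - s" by (simp add: square_eq_iff)
  have y_power_q: "y ^ q = (1 + s ^ q) / 2"
    using of_nat_in_subfield_Fq[of 2] by (simp add: y_def power_divide power_q_add subfield_Fq_def)
  have one_minus_y: "1 - y = (1 + - s) / 2"
    using two_nonzero by (simp add: y_def field_simps)
  have "y ^ q = y \<or> y ^ q = 1 - y"
    using s_power_q
  proof
    assume "s ^ q = s"
    then have "y ^ q = y" unfolding y_power_q by (simp only: y_def)
    then show ?thesis ..
  next
    assume "s ^ q = - s"
    then have "y ^ q = 1 - y" unfolding y_power_q one_minus_y by (simp only:)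
    then show ?thesis ..
  qed
  moreover have "s \<noteq> 0" using s c four_nonzero[OF two_nonzero] by (auto simp: field_simps)
  then have "y \<noteq> 1 / 2" using two_nonzero by (simp add: y_def)
  ultimately have "y \<in> setS q" by (simp add: setS_iff)
  moreover have "y * (1 - y) = c"
  proof -
    have "y * (1 - y) = ((1 + s) * (1 + - s)) / (2 * 2)"
      unfolding one_minus_y unfolding y_def by (rule times_divide_times_eq)
    also have "(1 + s) * (1 + - s) = 4 * c" using s by (simp add: algebra_simps)
    finally show ?thesis using four_nonzero[OF two_nonzero] by simp
  qed
  ultimately show "c \<in> (\<lambda>y. y * (1 - y)) ` setS q" by blast
qed

lemma rdickson3_one_bij_betw_subfield_Fq_iff:
  assumes "finite (UNIV :: 'a set)"
    and squares: "\<And>d::'a. d \<in> subfield_Fq q \<Longrightarrow> \<exists>s. s * s = d"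
  shows "bij_betw (\<lambda>c::'a. rdickson3 n 1 c) (subfield_Fq q) (subfield_Fq q)
    \<longleftrightarrow> ((\<forall>z \<in> gmap n ` (setS q :: 'a set). card {y \<in> setS q. gmap n y = z} = 2)
         \<and> (\<forall>y \<in> (setS q :: 'a set). gmap n y \<noteq> of_nat n / 2 ^ (n - 1)))"
proof -
  define F where "F = (\<lambda>c::'a. rdickson3 n 1 c)"
  define A where "A = subfield_Fq q - {1 / 4 :: 'a}"
  have finite_Fq: "finite (subfield_Fq q :: 'a set)" and finite_S: "finite (setS q :: 'a set)"
    using assms(1) by (auto intro: finite_subset)
  have image_h: "(\<lambda>y. y * (1 - y)) ` setS q = A"
    unfolding A_def using squares by (rule image_setS_times_one_minus)
  have g_eq: "gmap n y = F (y * (1 - y))" if "y \<in> setS q" for y :: 'a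
    using that by (simp add: F_def setS_iff gmap_eq_rdickson3_one)
  have two_to_one: "(\<forall>z \<in> gmap n ` (setS q :: 'a set). card {y \<in> setS q. gmap n y = z} = 2) \<longleftrightarrow> inj_on F A"
    by (rule card_fibres_comp_eq_2_iff_inj_on[where F = F, OF finite_S image_h card_setS_fibre g_eq])
  have avoids_target: "(\<forall>y \<in> (setS q :: 'a set). gmap n y \<noteq> of_nat n / 2 ^ (n - 1)) \<longleftrightarrow> F (1 / 4) \<notin> F ` A"
  proof -
    have "F ` A = gmap n ` setS q"
      unfolding image_h[symmetric] image_image using g_eq by (intro image_cong[OF refl]) simp
    moreover have "of_nat n / 2 ^ (n - 1) = F (1 / 4)"
      unfolding F_def by (rule rdickson3_one_quarter[OF two_nonzero])
    ultimately show ?thesis by auto (metis image_eqI)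
  qed
  have "F ` subfield_Fq q \<subseteq> subfield_Fq q"
    using rdickson3_one_in_subfield_Fq by (auto simp: F_def)
  then have "bij_betw F (subfield_Fq q) (subfield_Fq q) \<longleftrightarrow> inj_on F (subfield_Fq q)"
    using finite_Fq endo_inj_surj bij_betw_def by metis
  also have "\<dots> \<longleftrightarrow> inj_on F A \<and> F (1 / 4) \<notin> F ` A"
  proof -
    have "subfield_Fq q = insert (1 / 4) A"
      using quarter_in_subfield_Fq by (auto simp: A_def)
    then show ?thesis using inj_on_insert[of F "1 / 4" A] by (simp add: A_def)
  qed
  finally show ?thesis unfolding F_def[symmetric] two_to_one avoids_target .
qed

end

theorem theorem2p10:
  fixes p q k n :: nat
  assumes "prime p" and "odd p" and "k \<ge> 1" and "q = p ^ k"
    and "card (UNIV::'a::{field,finite} set) = q ^ 2"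
  shows "bij_betw (\<lambda>c::'a. rdickson3 n 1 c) (subfield_Fq q) (subfield_Fq q)
    \<longleftrightarrow> ((\<forall>z \<in> gmap n ` (setS q :: 'a set). card {y \<in> setS q. gmap n y = z} = 2)
         \<and> (\<forall>y \<in> (setS q :: 'a set). gmap n y \<noteq> of_nat n / 2 ^ (n - 1)))"
proof (rule rdickson3_one_bij_betw_subfield_Fq_iff)
  have CHAR: "CHAR('a) = p"
    using assms(1,4,5) by (intro CHAR_eq_of_card_eq_prime_power) (simp_all add: power_mult[symmetric])
  show "(x + y) ^ q = x ^ q + y ^ q" for x y :: 'a
    using assms(1,4) CHAR by (intro freshmans_dream') simp_all
  show "odd q" using assms(2,4) by simp
  show "(2::'a) \<noteq> 0" using assms(1,2) CHAR by (intro two_nonzero_of_CHAR) simp_all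
  show "\<exists>s. s * s = d" if "d \<in> subfield_Fq q" for d :: 'a
    using that assms(2,4,5) by (intro square_root_in_field_of_card_square) (simp_all add: subfield_Fq_def)
qed simp

end
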